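(* Two groups $k,k'\in[K]$ are oracle-equivalent if and only if the optimal loss $l^*((1-\alpha)\mathbf{e}_k+\alpha\mathbf{e}_{k'})$ is constant for all $\alpha\in[0,1]$.
   Context: $K$ groups with fixed distributions $D_k$ over $\mathcal{X}\times\mathcal{Y}$; hypothesis class $\mathcal{H}$, loss $\mathcal{L}:\mathcal{Y}\times\mathcal{Y}\to\mathbb{R}$. For $\mathbf{p}\in\Delta^K$, $D_{\mathbf{p}}=\sum_jp_jD_j$, $\mathcal{L}_{\mathbf{p}}(h)=\mathbb{E}_{D_{\mathbf{p}}}[\mathcal{L}(h(x),y)]$, $\mathcal{L}_{D_j}(h)=\mathcal{L}_j(h)=\mathbb{E}_{D_j}[\mathcal{L}(h(x),y)]$, and $l^*(\mathbf{p})=\min_{h\in\mathcal{H}}\mathcal{L}_{\mathbf{p}}(h)$ (minima assumed attained). $\mathbf{e}_j$ is the $j$-th vertex of the simplex. A set $K^*\subseteq[K]$ is oracle-equivalent if there exists $h\in\bigcap_{j\in K^*}\arg\min_{h'\in\mathcal{H}}\mathcal{L}_{D_j}(h')$ with $\mathcal{L}_{j_1}(h)=\mathcal{L}_{j_2}(h)$ for all $j_1,j_2\in K^*$. *)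

theory Defs
  imports "HOL-Probability.Probability"
begin

text \<open>Groups are indexed by \<open>{..<K}\<close> (standing for [K]). A weight vector is a
function \<open>nat \<Rightarrow> real\<close> supported on \<open>{..<K}\<close>.\<close>

definition prob_simplex :: "nat \<Rightarrow> (nat \<Rightarrow> real) set" where
  "prob_simplex K = {p. (\<forall>j. 0 \<le> p j) \<and> (\<forall>j\<ge>K. p j = 0) \<and> (\<Sum>j<K. p j) = 1}"

definition vertex :: "nat \<Rightarrow> nat \<Rightarrow> real" where
  "vertex k = (\<lambda>j. if j = k then 1 else 0)"

definition loss_on :: "('y \<Rightarrow> 'y \<Rightarrow> real) \<Rightarrow> ('x \<times> 'y) measure \<Rightarrow> ('x \<Rightarrow> 'y) \<Rightarrow> real" where
  "loss_on L D h = (\<integral>z. L (h (fst z)) (snd z) \<partial>D)"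

text \<open>Loss under the mixture D_p = sum_j p_j D_j (expanded by linearity of expectation).\<close>
definition mix_loss :: "nat \<Rightarrow> (nat \<Rightarrow> ('x \<times> 'y) measure) \<Rightarrow> ('y \<Rightarrow> 'y \<Rightarrow> real)
    \<Rightarrow> (nat \<Rightarrow> real) \<Rightarrow> ('x \<Rightarrow> 'y) \<Rightarrow> real" where
  "mix_loss K D L p h = (\<Sum>j<K. p j * loss_on L (D j) h)"

definition opt_loss :: "nat \<Rightarrow> (nat \<Rightarrow> ('x \<times> 'y) measure) \<Rightarrow> ('x \<Rightarrow> 'y) set
    \<Rightarrow> ('y \<Rightarrow> 'y \<Rightarrow> real) \<Rightarrow> (nat \<Rightarrow> real) \<Rightarrow> real" where
  "opt_loss K D H L p = (INF h\<in>H. mix_loss K D L p h)"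

definition argmin_on :: "('a \<Rightarrow> real) \<Rightarrow> 'a set \<Rightarrow> 'a set" where
  "argmin_on f H = {h \<in> H. \<forall>h'\<in>H. f h \<le> f h'}"

definition oracle_equivalent :: "(nat \<Rightarrow> ('x \<times> 'y) measure) \<Rightarrow> ('x \<Rightarrow> 'y) set
    \<Rightarrow> ('y \<Rightarrow> 'y \<Rightarrow> real) \<Rightarrow> nat set \<Rightarrow> bool" where
  "oracle_equivalent D H L Ks \<longleftrightarrow>
     (\<exists>h. (\<forall>j\<in>Ks. h \<in> argmin_on (loss_on L (D j)) H) \<and>
          (\<forall>j1\<in>Ks. \<forall>j2\<in>Ks. loss_on L (D j1) h = loss_on L (D j2) h))"

end

theory Submission
  imports Defs
begin

text \<open>Along the segment from \<open>e\<^sub>k\<close> to \<open>e\<^sub>k'\<close> the mixture loss is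
  \<open>(1 - \<alpha>) f + \<alpha> g\<close> with \<open>f, g\<close> the two group losses. A common minimiser of \<open>f\<close> and \<open>g\<close>
  with equal values minimises every such combination, so the optimal loss is constant.
  Conversely, if it is a constant \<open>c\<close>, the endpoints give \<open>c = min f = min g\<close>, and a
  minimiser \<open>h\<close> of \<open>(f + g)/2\<close> satisfies \<open>f h + g h = 2c\<close> with \<open>f h, g h \<ge> c\<close>, so
  \<open>h\<close> is a common minimiser with \<open>f h = g h = c\<close>.\<close>

lemma INF_eq_argmin_on:
  fixes F :: "'a \<Rightarrow> real"
  assumes "h \<in> argmin_on F H"
  shows "(INF x\<in>H. F x) = F h"
  using assms unfolding argmin_on_def by (auto intro: cInf_eq_minimum)

lemma argmin_on_convex_combination:
  fixes f g :: "'a \<Rightarrow> real"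
  assumes "h \<in> argmin_on f H" "h \<in> argmin_on g H" "0 \<le> \<alpha>" "\<alpha> \<le> 1"
  shows "h \<in> argmin_on (\<lambda>h. (1 - \<alpha>) * f h + \<alpha> * g h) H"
  using assms unfolding argmin_on_def by (auto intro!: add_mono mult_left_mono)

lemma common_argmin_on_iff_constant_INF:
  fixes f g :: "'a \<Rightarrow> real"
  assumes attained: "\<forall>\<alpha>\<in>{0..1}. argmin_on (\<lambda>h. (1 - \<alpha>) * f h + \<alpha> * g h) H \<noteq> {}"
  shows "(\<exists>h. h \<in> argmin_on f H \<and> h \<in> argmin_on g H \<and> f h = g h) \<longleftrightarrow>
    (\<exists>c. \<forall>\<alpha>\<in>{0..1}. (INF h\<in>H. (1 - \<alpha>) * f h + \<alpha> * g h) = c)"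
proof
  assume "\<exists>h. h \<in> argmin_on f H \<and> h \<in> argmin_on g H \<and> f h = g h"
  then obtain h where h: "h \<in> argmin_on f H" "h \<in> argmin_on g H" "f h = g h"
    by blast
  have "(INF h\<in>H. (1 - \<alpha>) * f h + \<alpha> * g h) = f h" if "\<alpha> \<in> {0..1}" for \<alpha>
    using INF_eq_argmin_on[OF argmin_on_convex_combination[OF h(1,2)]] that h(3)
    by (simp add: algebra_simps)
  then show "\<exists>c. \<forall>\<alpha>\<in>{0..1}. (INF h\<in>H. (1 - \<alpha>) * f h + \<alpha> * g h) = c"
    by blast
next
  assume "\<exists>c. \<forall>\<alpha>\<in>{0..1}. (INF h\<in>H. (1 - \<alpha>) * f h + \<alpha> * g h) = c"
  then obtain c where c: "\<And>\<alpha>. \<alpha> \<in> {0..1} \<Longrightarrow> (INF h\<in>H. (1 - \<alpha>) * f h + \<alpha> * g h) = c"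
    by blast
  have min_at: "\<exists>h. h \<in> argmin_on (\<lambda>h. (1 - \<alpha>) * f h + \<alpha> * g h) H \<and>
      (1 - \<alpha>) * f h + \<alpha> * g h = c" if "\<alpha> \<in> {0..1}" for \<alpha>
    using attained c[OF that] INF_eq_argmin_on that by fastforce
  obtain h0 where "h0 \<in> argmin_on f H" "f h0 = c"
    using min_at[of 0] by auto
  then have f_ge: "c \<le> f h'" if "h' \<in> H" for h'
    using that unfolding argmin_on_def by auto
  obtain h1 where "h1 \<in> argmin_on g H" "g h1 = c"
    using min_at[of 1] by auto
  then have g_ge: "c \<le> g h'" if "h' \<in> H" for h'
    using that unfolding argmin_on_def by auto
  obtain h where h: "h \<in> H" "f h / 2 + g h / 2 = c"
    using min_at[of "1/2"] unfolding argmin_on_def by auto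
  moreover have "c \<le> f h" "c \<le> g h"
    using f_ge g_ge h(1) by auto
  ultimately have "f h = c" "g h = c"
    by linarith+
  then have "h \<in> argmin_on f H" "h \<in> argmin_on g H"
    using h(1) f_ge g_ge by (simp_all add: argmin_on_def)
  with \<open>f h = c\<close> \<open>g h = c\<close> show "\<exists>h. h \<in> argmin_on f H \<and> h \<in> argmin_on g H \<and> f h = g h"
    by auto
qed

lemma sum_vertex_mult:
  assumes "k < K"
  shows "(\<Sum>j<K. vertex k j * x j) = x k"
  using assms by (simp add: vertex_def if_distrib[of "\<lambda>v. v * _"] cong: if_cong)

lemma mix_loss_segment:
  assumes "k < K" "k' < K"
  shows "mix_loss K D L (\<lambda>j. (1 - \<alpha>) * vertex k j + \<alpha> * vertex k' j) h
       = (1 - \<alpha>) * loss_on L (D k) h + \<alpha> * loss_on L (D k') h"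
proof -
  have "mix_loss K D L (\<lambda>j. (1 - \<alpha>) * vertex k j + \<alpha> * vertex k' j) h
      = (1 - \<alpha>) * (\<Sum>j<K. vertex k j * loss_on L (D j) h)
        + \<alpha> * (\<Sum>j<K. vertex k' j * loss_on L (D j) h)"
    unfolding mix_loss_def sum_distrib_left sum.distrib[symmetric]
    by (rule sum.cong) (simp_all add: algebra_simps)
  then show ?thesis
    using assms by (simp add: sum_vertex_mult)
qed

lemma segment_in_prob_simplex:
  assumes "k < K" "k' < K" "0 \<le> \<alpha>" "\<alpha> \<le> 1"
  shows "(\<lambda>j. (1 - \<alpha>) * vertex k j + \<alpha> * vertex k' j) \<in> prob_simplex K"
proof -
  have "(\<Sum>j<K. (1 - \<alpha>) * vertex k j + \<alpha> * vertex k' j)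
      = (1 - \<alpha>) * (\<Sum>j<K. vertex k j * 1) + \<alpha> * (\<Sum>j<K. vertex k' j * 1)"
    by (simp add: sum_distrib_left sum.distrib)
  then show ?thesis
    using assms by (auto simp: prob_simplex_def sum_vertex_mult vertex_def)
qed

theorem proposition8:
  fixes K :: nat and D :: "nat \<Rightarrow> ('x \<times> 'y) measure" and H :: "('x \<Rightarrow> 'y) set"
    and L :: "'y \<Rightarrow> 'y \<Rightarrow> real" and k k' :: nat
  assumes dists: "\<forall>j<K. prob_space (D j)"
    and integ: "\<forall>j<K. \<forall>h\<in>H. integrable (D j) (\<lambda>z. L (h (fst z)) (snd z))"
    and attained: "\<forall>p\<in>prob_simplex K. \<exists>h\<in>H. \<forall>h'\<in>H. mix_loss K D L p h \<le> mix_loss K D L p h'"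
    and k: "k < K" and k': "k' < K"
  shows "oracle_equivalent D H L {k, k'} \<longleftrightarrow>
    (\<exists>c. \<forall>\<alpha>\<in>{0..1::real}.
       opt_loss K D H L (\<lambda>j. (1 - \<alpha>) * vertex k j + \<alpha> * vertex k' j) = c)"
proof -
  let ?f = "loss_on L (D k)" and ?g = "loss_on L (D k')"
  have "argmin_on (\<lambda>h. (1 - \<alpha>) * ?f h + \<alpha> * ?g h) H \<noteq> {}" if "\<alpha> \<in> {0..1}" for \<alpha>
  proof -
    from that have "(\<lambda>j. (1 - \<alpha>) * vertex k j + \<alpha> * vertex k' j) \<in> prob_simplex K"
      by (simp add: segment_in_prob_simplex[OF k k'])
    with attained show ?thesis
      by (force simp: argmin_on_def mix_loss_segment[OF k k'])
  qed
  then have "(\<exists>h. h \<in> argmin_on ?f H \<and> h \<in> argmin_on ?g H \<and> ?f h = ?g h) \<longleftrightarrow>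
      (\<exists>c. \<forall>\<alpha>\<in>{0..1}. (INF h\<in>H. (1 - \<alpha>) * ?f h + \<alpha> * ?g h) = c)"
    by (intro common_argmin_on_iff_constant_INF) blast
  then show ?thesis
    unfolding oracle_equivalent_def opt_loss_def mix_loss_segment[OF k k'] by auto
qed

end
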